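(* Let $\mathbb F$ be any field, $n\ge k\ge1$, let $\mathbf z\in\mathbb F^n$ with $\mathbf z_1=-1$, and let $\mathcal K=\{X\in M_{n\times k}(\mathbb F): \mathbf z^tX=0\}$. Then $\det_{n,k}(X)=0$ for all $X\in\mathcal K$ if and only if $$1+\sum_{\alpha=1}^k \mathbf z_{c(\alpha)}(-1)^{\alpha-c(\alpha)}=0$$ for every $k$-element subset $c=\{c(1)<\dots<c(k)\}$ of $[n]$ with $1\notin c$.
   Context: Cullis' determinant: for $n\ge k$, $\det_{n,k}(X)=\sum_{c}\operatorname{sgn}(c)\det(X[c|))$, sum over $k$-subsets $c=\{c(1)<\dots<c(k)\}$ of $[n]=\{1,\dots,n\}$, $X[c|)$ the $k\times k$ submatrix formed by the rows with indices in $c$, $\operatorname{sgn}(c)=(-1)^{\sum_{\alpha=1}^k(c(\alpha)-\alpha)}$. *)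

theory Defs
  imports "HOL-Analysis.Analysis" "HOL-Combinatorics.Permutations"
begin

text \<open>Matrices are functions nat => nat => 'a, with row indices 1..n and column
indices 1..k (entries outside this range are ignored). Vectors are nat => 'a
with indices 1..n.\<close>

definition elem_of :: "nat set \<Rightarrow> nat \<Rightarrow> nat" where
  "elem_of c \<alpha> = sorted_list_of_set c ! (\<alpha> - 1)"

definition det_k :: "nat \<Rightarrow> (nat \<Rightarrow> nat \<Rightarrow> 'a::comm_ring_1) \<Rightarrow> 'a" where
  "det_k k A = (\<Sum>p | p permutes {1..k}. of_int (sign p) * (\<Prod>i=1..k. A i (p i)))"

definition rowsub :: "nat set \<Rightarrow> (nat \<Rightarrow> nat \<Rightarrow> 'a) \<Rightarrow> nat \<Rightarrow> nat \<Rightarrow> 'a" where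
  "rowsub c X = (\<lambda>\<alpha> j. X (elem_of c \<alpha>) j)"

definition sgn_sub :: "nat set \<Rightarrow> 'a::comm_ring_1" where
  "sgn_sub c = (-1) ^ (\<Sum>\<alpha>=1..card c. elem_of c \<alpha> - \<alpha>)"

definition cullis_det :: "nat \<Rightarrow> nat \<Rightarrow> (nat \<Rightarrow> nat \<Rightarrow> 'a::comm_ring_1) \<Rightarrow> 'a" where
  "cullis_det n k X = (\<Sum>c | c \<subseteq> {1..n} \<and> card c = k. sgn_sub c * det_k k (rowsub c X))"

end

(*
  Write r_i for the i-th row of X.  On the kernel, r_1 = sum_{i >= 2} z_i r_i.  In
  det_{n,k}(X), keep the k-subsets of {2..n} and rewrite each subset {1} u d: expanding
  its first row by linearity leaves, for every i in {2..n} - d, the minor with rows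
  i, d(1), ..., d(k-1), in this order.  Moving row i down to its sorted place a in
  e = d u {i} costs (-1)^(a-1), and sgn({1} u d) = (-1)^(i+1) sgn(e).  Regrouping by e,
    det_{n,k}(X) = sum_e sgn(e) det(X[e|)) (1 + sum_alpha z_{e(alpha)} (-1)^(alpha - e(alpha))),
  the sum over all k-subsets e of {2..n}.  So the condition suffices.  Conversely, for a
  given c the kernel matrix whose rows c(1), ..., c(k) form the identity, whose first row
  is (z_{c(1)}, ..., z_{c(k)}) and whose other rows vanish keeps only the term of c.
*)

theory Submission
  imports Defs
begin

lemma strict_mono_on_elem_of: "strict_mono_on {1..card c} (elem_of c)"
proof (rule strict_mono_onI)
  fix a b assume "a \<in> {1..card c}" "b \<in> {1..card c}" "a < b"
  moreover have "sorted_wrt (<) (sorted_list_of_set c)" by simp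
  ultimately show "elem_of c a < elem_of c b"
    unfolding elem_of_def by (auto simp: sorted_wrt_iff_nth_less)
qed

lemma elem_of_in:
  assumes "finite c" "a \<in> {1..card c}"
  shows "elem_of c a \<in> c"
proof -
  have "sorted_list_of_set c ! (a - 1) \<in> set (sorted_list_of_set c)"
    using assms(2) by (intro nth_mem) auto
  then show ?thesis using assms(1) by (simp add: elem_of_def)
qed

lemma elem_of_bij_betw:
  assumes "finite c"
  shows "bij_betw (elem_of c) {1..card c} c"
proof -
  have inj: "inj_on (elem_of c) {1..card c}"
    by (rule strict_mono_on_imp_inj_on[OF strict_mono_on_elem_of])
  moreover have "elem_of c ` {1..card c} = c"
  proof (rule card_subset_eq[OF assms])
    show "elem_of c ` {1..card c} \<subseteq> c" using elem_of_in[OF assms] by blast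
    show "card (elem_of c ` {1..card c}) = card c" using card_image[OF inj] by simp
  qed
  ultimately show ?thesis by (simp add: bij_betw_def)
qed

lemma elem_ofE:
  assumes "finite c" "x \<in> c"
  obtains \<alpha> where "\<alpha> \<in> {1..card c}" "elem_of c \<alpha> = x"
proof -
  have "x \<in> elem_of c ` {1..card c}"
    using bij_betw_imp_surj_on[OF elem_of_bij_betw[OF assms(1)]] assms(2) by simp
  then show ?thesis using that by blast
qed

lemma sum_elem_of:
  assumes "finite c"
  shows "(\<Sum>\<alpha>=1..card c. g (elem_of c \<alpha>)) = (\<Sum>x\<in>c. g x)"
  using sum.reindex_bij_betw[OF elem_of_bij_betw[OF assms]] .

lemma elem_of_ge_index:
  assumes "0 \<notin> c" "\<alpha> \<in> {1..card c}"
  shows "\<alpha> \<le> elem_of c \<alpha>"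
  using assms(2)
proof (induction \<alpha>)
  case (Suc \<alpha>)
  have fin: "finite c" using Suc.prems card.infinite by fastforce
  show ?case
  proof (cases "\<alpha> = 0")
    case True
    then show ?thesis using elem_of_in[OF fin Suc.prems] assms(1) by (cases "elem_of c 1") auto
  next
    case False
    then have "\<alpha> \<le> elem_of c \<alpha>" using Suc by simp
    moreover have "elem_of c \<alpha> < elem_of c (Suc \<alpha>)"
      using strict_mono_onD[OF strict_mono_on_elem_of] Suc.prems False by simp
    ultimately show ?thesis by simp
  qed
qed simp

lemma elem_of_insert_min:
  assumes "finite d" "\<forall>v\<in>d. y < v"
  shows "elem_of (insert y d) 1 = y" and "1 \<le> \<alpha> \<Longrightarrow> elem_of (insert y d) (Suc \<alpha>) = elem_of d \<alpha>"
proof -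
  have "sorted_list_of_set (insert y d) = y # sorted_list_of_set d"
  proof -
    have "y \<notin> d" using assms(2) by blast
    then have "sorted_list_of_set (insert y d) = insort y (sorted_list_of_set d)"
      using assms(1) by simp
    then show ?thesis using assms by (simp add: less_imp_le insort_is_Cons)
  qed
  then show "elem_of (insert y d) 1 = y" "1 \<le> \<alpha> \<Longrightarrow> elem_of (insert y d) (Suc \<alpha>) = elem_of d \<alpha>"
    by (simp_all add: elem_of_def nth_Cons')
qed

lemma elem_of_remove:
  assumes "finite e" "a \<in> {1..card e}" "\<beta> \<in> {1..card e - 1}"
  shows "elem_of (e - {elem_of e a}) \<beta> = elem_of e (if \<beta> < a then \<beta> else Suc \<beta>)"
proof -
  let ?L = "sorted_list_of_set e"
  have "a - 1 < length ?L" "Suc (a - 1) = a" using assms(2) by auto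
  then have L: "?L = take (a - 1) ?L @ elem_of e a # drop a ?L"
    unfolding elem_of_def by (metis id_take_nth_drop)
  have "distinct (take (a - 1) ?L @ elem_of e a # drop a ?L)"
    by (subst L[symmetric]) simp
  then have "elem_of e a \<notin> set (take (a - 1) ?L)" by simp
  then have "remove1 (elem_of e a) ?L = take (a - 1) ?L @ drop a ?L"
    using L remove1_split[of "elem_of e a" ?L] by (metis in_set_conv_decomp)
  then have "sorted_list_of_set (e - {elem_of e a}) = take (a - 1) ?L @ drop a ?L"
    using assms(1) by (simp add: sorted_list_of_set_remove)
  then show ?thesis using assms by (auto simp: elem_of_def nth_append)
qed

lemma sgn_sub_eq_power_sum:
  assumes "finite c" "0 \<notin> c"
  shows "(sgn_sub c :: 'a::comm_ring_1) = (-1) ^ (\<Sum>c + (\<Sum>\<alpha>=1..card c. \<alpha>))"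
proof -
  let ?s = "\<Sum>\<alpha>=1..card c. elem_of c \<alpha> - \<alpha>" and ?t = "\<Sum>\<alpha>=1..card c. \<alpha>"
  have "?s + ?t = (\<Sum>\<alpha>=1..card c. elem_of c \<alpha>)"
    using elem_of_ge_index[OF assms(2)] by (simp add: sum.distrib[symmetric])
  also have "\<dots> = \<Sum>c" by (rule sum_elem_of[OF assms(1)])
  finally have eq: "?s + 2 * ?t = \<Sum>c + ?t" by simp
  have "(sgn_sub c :: 'a) = (-1) ^ (?s + 2 * ?t)" by (simp add: sgn_sub_def power_add power_mult)
  then show ?thesis unfolding eq .
qed

lemma sgn_sub_insert_swap:
  assumes "finite d" "0 \<notin> d" "x \<notin> d" "y \<notin> d" "x \<noteq> 0" "y \<noteq> 0"
  shows "(sgn_sub (insert y d) :: 'a::comm_ring_1) = (-1) ^ (x + y) * sgn_sub (insert x d)"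
proof -
  have "(-1::'a) ^ (y + \<Sum>d) = (-1) ^ (x + y) * (-1) ^ (x + \<Sum>d)"
    by (simp add: power_add mult_ac flip: power2_eq_square power_mult)
  then show ?thesis
    using assms by (simp add: sgn_sub_eq_power_sum power_add mult_ac)
qed

lemma det_k_cong:
  assumes "\<And>i j. i \<in> {1..k} \<Longrightarrow> j \<in> {1..k} \<Longrightarrow> A i j = B i j"
  shows "det_k k A = det_k k B"
  unfolding det_k_def
proof (rule sum.cong[OF refl])
  fix p assume "p \<in> {p. p permutes {1..k}}"
  then have p: "p permutes {1..k}" by simp
  show "of_int (sign p) * (\<Prod>i = 1..k. A i (p i)) = of_int (sign p) * (\<Prod>i = 1..k. B i (p i))"
    using assms permutes_in_image[OF p] by (auto intro!: prod.cong)
qed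

lemma det_k_zero_row:
  assumes "r \<in> {1..k}" "\<And>j. j \<in> {1..k} \<Longrightarrow> A r j = 0"
  shows "det_k k A = 0"
  unfolding det_k_def
proof (rule sum.neutral, rule ballI)
  fix p assume "p \<in> {p. p permutes {1..k}}"
  then have "p permutes {1..k}" by simp
  then have "p r \<in> {1..k}" using assms(1) by (rule permutes_in_image[THEN iffD2])
  then have "(\<Prod>i = 1..k. A i (p i)) = 0"
    using assms by (intro prod_zero bexI[of _ r]) auto
  then show "of_int (sign p) * (\<Prod>i = 1..k. A i (p i)) = 0" by simp
qed

lemma det_k_identity: "det_k k (\<lambda>i j. if i = j then 1 else 0) = 1"
proof -
  let ?f = "\<lambda>p. of_int (sign p) * (\<Prod>i = 1..k. if i = p i then 1 else 0) :: 'a"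
  have "det_k k (\<lambda>i j. if i = j then 1 else 0) = ?f id + sum ?f ({p. p permutes {1..k}} - {id})"
    unfolding det_k_def by (rule sum.remove) (simp_all add: finite_permutations)
  also have "sum ?f ({p. p permutes {1..k}} - {id}) = 0"
  proof (rule sum.neutral, rule ballI)
    fix p assume "p \<in> {p. p permutes {1..k}} - {id}"
    then obtain i where "p i \<noteq> i" "p permutes {1..k}" by (auto simp: fun_eq_iff)
    then have "i \<in> {1..k}" by (meson permutes_not_in)
    with \<open>p i \<noteq> i\<close> show "?f p = 0" by (subst prod_zero) (auto intro!: bexI[of _ i])
  qed
  finally show ?thesis by simp
qed

lemma det_k_permute_rows:
  assumes s: "s permutes {1..k}"
  shows "det_k k (\<lambda>i. A (s i)) = of_int (sign s) * det_k k A"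
proof -
  have "det_k k (\<lambda>i. A (s i)) =
      (\<Sum>q | q permutes {1..k}. of_int (sign (q \<circ> s)) * (\<Prod>i = 1..k. A (s i) (q (s i))))"
    unfolding det_k_def by (subst sum_permutations_compose_right[OF s]) simp
  also have "\<dots> =
      (\<Sum>q | q permutes {1..k}. of_int (sign s) * (of_int (sign q) * (\<Prod>i = 1..k. A i (q i))))"
  proof (rule sum.cong[OF refl])
    fix q assume "q \<in> {q. q permutes {1..k}}"
    then have "sign (q \<circ> s) = sign q * sign s"
      using s by (intro sign_compose) (auto simp: permutation_permutes)
    moreover have "(\<Prod>i = 1..k. A (s i) (q (s i))) = (\<Prod>i = 1..k. A i (q i))"
      using prod.permute[OF s, of "\<lambda>i. A i (q i)"] by (simp add: o_def)
    ultimately show "of_int (sign (q \<circ> s)) * (\<Prod>i = 1..k. A (s i) (q (s i))) =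
        of_int (sign s) * (of_int (sign q) * (\<Prod>i = 1..k. A i (q i)))"
      by simp
  qed
  also have "\<dots> = of_int (sign s) * det_k k A"
    unfolding det_k_def by (simp add: sum_distrib_left)
  finally show ?thesis .
qed

lemma det_k_equal_rows:
  assumes ab: "a \<in> {1..k}" "b \<in> {1..k}" "a \<noteq> b" and eq: "A a = A b"
  shows "det_k k A = 0"
  unfolding det_k_def
proof (rule sum_involution_eq_0[where h = "\<lambda>p. p \<circ> Transposition.transpose a b"])
  let ?t = "Transposition.transpose a b"
  have t: "?t permutes {1..k}" using ab by (intro permutes_swap_id) auto
  fix p assume "p \<in> {p. p permutes {1..k}}"
  then have p: "p permutes {1..k}" by simp
  show "p \<circ> ?t \<in> {p. p permutes {1..k}}" using p t by (simp add: permutes_compose)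
  show "p \<circ> ?t \<circ> ?t = p" by (simp add: fun_eq_iff)
  show "p \<circ> ?t \<noteq> p"
    using ab permutes_inj[OF p] by (metis comp_apply inj_eq transpose_apply_first)
  have "sign (p \<circ> ?t) = - sign p"
    using p t ab by (subst sign_compose) (auto simp: permutation_permutes sign_swap_id)
  moreover have "(\<Prod>i = 1..k. A i ((p \<circ> ?t) i)) = (\<Prod>i = 1..k. A (?t i) (p i))"
    using prod.permute[OF t, of "\<lambda>i. A (?t i) (p i)"] by (simp add: o_def)
  moreover have "\<dots> = (\<Prod>i = 1..k. A i (p i))"
    using eq by (intro prod.cong) (auto simp: Transposition.transpose_def)
  ultimately show "of_int (sign (p \<circ> ?t)) * (\<Prod>i = 1..k. A i ((p \<circ> ?t) i))
      + of_int (sign p) * (\<Prod>i = 1..k. A i (p i)) = 0"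
    by simp
qed

lemma det_k_linear_row:
  assumes r: "r \<in> {1..k}"
  shows "det_k k (A(r := (\<lambda>j. \<Sum>s\<in>S. w s * B s j))) = (\<Sum>s\<in>S. w s * det_k k (A(r := B s)))"
proof -
  have split: "(\<Prod>i = 1..k. (A(r := R)) i (p i)) = R (p r) * (\<Prod>i\<in>{1..k} - {r}. A i (p i))" for R p
    using r by (simp add: prod.remove)
  show ?thesis
    unfolding det_k_def split
    by (simp add: sum_distrib_left sum_distrib_right mult_ac flip: sum.swap[of _ S])
qed

text \<open>Reindexing the rows by \<open>front_cycle a\<close> moves row \<open>a\<close> to the top and keeps
  the order of the other rows.\<close>

definition front_cycle :: "nat \<Rightarrow> nat \<Rightarrow> nat" where
  "front_cycle a b = (if b = 1 then a else if b \<le> a then b - 1 else b)"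

lemma front_cycle_1: "front_cycle 1 = id"
  by (auto simp: front_cycle_def fun_eq_iff)

lemma front_cycle_Suc:
  "1 \<le> a \<Longrightarrow> front_cycle (Suc a) = Transposition.transpose a (Suc a) \<circ> front_cycle a"
  by (auto simp: front_cycle_def fun_eq_iff Transposition.transpose_def)

lemma front_cycle_permutes: "1 \<le> a \<Longrightarrow> front_cycle a permutes {1..a}"
proof (induction a rule: nat_induct_at_least)
  case base
  show ?case unfolding front_cycle_1 by (rule permutes_id)
next
  case (Suc a)
  have "front_cycle a permutes {1..Suc a}" using Suc.IH by (rule permutes_subset) auto
  moreover have "Transposition.transpose a (Suc a) permutes {1..Suc a}"
    using Suc.hyps by (intro permutes_swap_id) auto
  ultimately show ?case
    using Suc.hyps by (simp add: front_cycle_Suc permutes_compose del: comp_apply)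
qed

lemma sign_front_cycle: "1 \<le> a \<Longrightarrow> sign (front_cycle a) = (-1) ^ (a - 1)"
proof (induction a rule: nat_induct_at_least)
  case base
  show ?case by (simp add: front_cycle_1[simplified])
next
  case (Suc a)
  have "permutation (front_cycle a)"
    using front_cycle_permutes[OF Suc.hyps] by (auto simp: permutation_permutes)
  then have "sign (front_cycle (Suc a)) = - sign (front_cycle a)"
    using Suc.hyps by (simp add: front_cycle_Suc sign_compose sign_swap_id permutation_swap_id)
  with Suc.IH Suc.hyps show ?case by (simp add: power_eq_if)
qed

lemma det_k_front_cycle:
  assumes "a \<in> {1..k}"
  shows "det_k k (\<lambda>b. A (front_cycle a b)) = (-1) ^ (a - 1) * det_k k A"
proof -
  have "front_cycle a permutes {1..k}"
    using assms front_cycle_permutes[of a] by (auto intro: permutes_subset)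
  then show ?thesis using assms by (simp add: det_k_permute_rows sign_front_cycle)
qed

lemma det_k_rowsub_move_to_front:
  assumes e: "finite e" "a \<in> {1..card e}" and y: "\<forall>v\<in>e. y < v"
  defines "x \<equiv> elem_of e a"
  shows "det_k (card e) (rowsub (insert y (e - {x})) (X(y := X x)))
      = (-1) ^ (a - 1) * det_k (card e) (rowsub e X)"
proof -
  let ?d = "e - {x}"
  have x: "x \<in> e" unfolding x_def using elem_of_in[OF e] .
  have d: "finite ?d" "\<forall>v\<in>?d. y < v" "card ?d = card e - 1" using e y x by auto
  have "rowsub (insert y ?d) (X(y := X x)) b = rowsub e X (front_cycle a b)"
    if b: "b \<in> {1..card e}" for b
  proof (cases "b = 1")
    case True
    moreover have "elem_of (insert y ?d) 1 = y" by (rule elem_of_insert_min(1)[OF d(1,2)])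
    ultimately show ?thesis by (simp add: rowsub_def front_cycle_def x_def)
  next
    case False
    then obtain \<beta> where \<beta>: "b = Suc \<beta>" "\<beta> \<in> {1..card e - 1}" using b by (cases b) auto
    then have "elem_of (insert y ?d) b = elem_of e (if \<beta> < a then \<beta> else b)"
      using elem_of_insert_min(2)[OF d(1,2)] elem_of_remove[OF e] by (simp add: x_def)
    moreover have "elem_of e (if \<beta> < a then \<beta> else b) \<noteq> y"
      using elem_of_in[OF e(1), of "if \<beta> < a then \<beta> else b"] \<beta> b y by auto
    ultimately show ?thesis using \<beta> by (auto simp: rowsub_def front_cycle_def)
  qed
  then have "det_k (card e) (rowsub (insert y ?d) (X(y := X x)))
      = det_k (card e) (\<lambda>b. rowsub e X (front_cycle a b))"
    by (intro det_k_cong) simp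
  also have "\<dots> = (-1) ^ (a - 1) * det_k (card e) (rowsub e X)"
    using det_k_front_cycle[OF e(2)] .
  finally show ?thesis .
qed

lemma sum_subsets_insert:
  assumes "finite A" "a \<notin> A"
  shows "(\<Sum>c | c \<subseteq> insert a A \<and> card c = Suc m. g c)
    = (\<Sum>c | c \<subseteq> A \<and> card c = Suc m. g c) + (\<Sum>d | d \<subseteq> A \<and> card d = m. g (insert a d))"
proof -
  let ?P = "{c. c \<subseteq> A \<and> card c = Suc m}" and ?Q = "{d. d \<subseteq> A \<and> card d = m}"
  have fin: "finite ?P" "finite ?Q" using assms(1) by (auto intro: finite_subset[of _ "Pow A"])
  have "{c. c \<subseteq> insert a A \<and> card c = Suc m} = ?P \<union> insert a ` ?Q"
  proof (intro equalityI subsetI)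
    fix c assume c: "c \<in> {c. c \<subseteq> insert a A \<and> card c = Suc m}"
    show "c \<in> ?P \<union> insert a ` ?Q"
    proof (cases "a \<in> c")
      case True
      then have "c - {a} \<in> ?Q" "c = insert a (c - {a})" using c by auto
      then show ?thesis by blast
    qed (use c in auto)
  next
    fix c assume "c \<in> ?P \<union> insert a ` ?Q"
    then show "c \<in> {c. c \<subseteq> insert a A \<and> card c = Suc m}"
      using assms by (auto simp: finite_subset card_insert_if subset_iff)
  qed
  moreover have "?P \<inter> insert a ` ?Q = {}" using assms(2) by auto
  moreover have "inj_on (insert a) ?Q"
    using assms(2) by (intro inj_onI) (metis insert_ident subsetD mem_Collect_eq)
  ultimately show ?thesis using fin by (simp add: sum.union_disjoint sum.reindex)
qed

lemma sum_insert_pairs: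
  assumes "finite A"
  shows "(\<Sum>d | d \<subseteq> A \<and> card d = m. \<Sum>i\<in>A - d. F (insert i d) i)
    = (\<Sum>e | e \<subseteq> A \<and> card e = Suc m. \<Sum>x\<in>e. F e x)"
proof -
  let ?P = "{e. e \<subseteq> A \<and> card e = Suc m}" and ?Q = "{d. d \<subseteq> A \<and> card d = m}"
  have fin: "finite ?P" "finite ?Q" using assms by (auto intro: finite_subset[of _ "Pow A"])
  have "(\<Sum>d\<in>?Q. \<Sum>i\<in>A - d. F (insert i d) i) = (\<Sum>(d, i)\<in>Sigma ?Q (\<lambda>d. A - d). F (insert i d) i)"
    using fin assms by (simp add: sum.Sigma)
  also have "\<dots> = (\<Sum>(e, x)\<in>Sigma ?P (\<lambda>e. e). F e x)"
    by (rule sum.reindex_bij_witness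
          [where i = "\<lambda>(e, x). (e - {x}, x)" and j = "\<lambda>(d, i). (insert i d, i)"])
      (use assms in \<open>auto simp: card_insert_if finite_subset\<close>)
  also have "\<dots> = (\<Sum>e\<in>?P. \<Sum>x\<in>e. F e x)"
    using fin assms by (intro sum.Sigma[symmetric]) (auto intro: finite_subset)
  finally show ?thesis .
qed

lemma det_k_rowsub_expand_min_row:
  assumes A: "finite A" "\<forall>v\<in>A. y < v" and d: "d \<subseteq> A" "card d = m"
    and row: "\<forall>j\<in>{1..Suc m}. X y j = (\<Sum>i\<in>A. z i * X i j)"
  shows "det_k (Suc m) (rowsub (insert y d) X)
    = (\<Sum>i\<in>A - d. z i * det_k (Suc m) (rowsub (insert y d) (X(y := X i))))"
proof -
  let ?Y = "rowsub (insert y d) X"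
  have fd: "finite d" "\<forall>v\<in>d. y < v" using A d finite_subset by auto
  have first: "elem_of (insert y d) 1 = y" by (rule elem_of_insert_min(1)[OF fd])
  have other: "elem_of (insert y d) (Suc \<beta>) = elem_of d \<beta>" "elem_of d \<beta> \<in> d" if "\<beta> \<in> {1..m}" for \<beta>
    using that elem_of_insert_min(2)[OF fd] elem_of_in[OF fd(1)] d(2) by auto
  have update: "rowsub (insert y d) (X(y := R)) b = (?Y(1 := R)) b" if "b \<in> {1..Suc m}" for R b
  proof (cases b)
    case (Suc \<beta>)
    then show ?thesis using that first other[of \<beta>] fd(2) by (cases "\<beta> = 0") (auto simp: rowsub_def)
  qed (use that in simp)
  have "det_k (Suc m) ?Y = det_k (Suc m) (?Y(1 := (\<lambda>j. \<Sum>i\<in>A. z i * X i j)))"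
    using row first by (intro det_k_cong) (auto simp: rowsub_def)
  also have "\<dots> = (\<Sum>i\<in>A. z i * det_k (Suc m) (?Y(1 := X i)))"
    by (rule det_k_linear_row) simp
  also have "\<dots> = (\<Sum>i\<in>A. z i * det_k (Suc m) (rowsub (insert y d) (X(y := X i))))"
    using update by (intro sum.cong refl arg_cong[where f = "\<lambda>t. _ * t"] det_k_cong) simp
  also have "\<dots> = (\<Sum>i\<in>A - d. z i * det_k (Suc m) (rowsub (insert y d) (X(y := X i))))"
  proof (rule sum.mono_neutral_right)
    show "\<forall>i\<in>A - (A - d). z i * det_k (Suc m) (rowsub (insert y d) (X(y := X i))) = 0"
    proof
      fix i assume "i \<in> A - (A - d)"
      then have "i \<in> d" "i \<noteq> y" using A(2) by auto
      then obtain \<beta> where \<beta>: "\<beta> \<in> {1..m}" "elem_of d \<beta> = i"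
        using elem_ofE[OF fd(1)] d(2) by metis
      have "det_k (Suc m) (rowsub (insert y d) (X(y := X i))) = 0"
        using \<open>i \<noteq> y\<close> \<beta> first other(1)
        by (intro det_k_equal_rows[of 1 _ "Suc \<beta>"]) (auto simp: rowsub_def)
      then show "z i * det_k (Suc m) (rowsub (insert y d) (X(y := X i))) = 0" by simp
    qed
  qed (use A in auto)
  finally show ?thesis .
qed

lemma power_int_minus_one_diff: "(-1::'a::field) powi (int a - int b) = (-1) ^ (a + b)"
  by (simp add: power_int_minus_left minus_one_power_iff)

lemma sgn_sub_det_k_move_to_front:
  assumes e: "finite e" "a \<in> {1..card e}" "0 \<notin> e" "1 \<notin> e"
  defines "x \<equiv> elem_of e a"
  shows "sgn_sub (insert 1 (e - {x})) * det_k (card e) (rowsub (insert 1 (e - {x})) (X(1 := X x)))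
    = (-1) powi (int a - int x)
        * (sgn_sub e * det_k (card e) (rowsub e (X :: nat \<Rightarrow> nat \<Rightarrow> 'a::field)))"
proof -
  have x: "x \<in> e" unfolding x_def by (rule elem_of_in[OF e(1,2)])
  then have "x \<noteq> 0" using e(3) by metis
  have "\<forall>v\<in>e. 1 < v" using e(3,4) by (metis le_neq_implies_less less_one not_le)
  then have det: "det_k (card e) (rowsub (insert 1 (e - {x})) (X(1 := X x)))
      = (-1) ^ (a - 1) * det_k (card e) (rowsub e X)"
    unfolding x_def by (rule det_k_rowsub_move_to_front[OF e(1,2)])
  have "(sgn_sub (insert 1 (e - {x})) :: 'a) = (-1) ^ (x + 1) * sgn_sub (insert x (e - {x}))"
    using e x \<open>x \<noteq> 0\<close> by (intro sgn_sub_insert_swap) auto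
  then have sgn: "(sgn_sub (insert 1 (e - {x})) :: 'a) = (-1) ^ (x + 1) * sgn_sub e"
    using x by (simp add: insert_absorb)
  have "sgn_sub (insert 1 (e - {x})) * det_k (card e) (rowsub (insert 1 (e - {x})) (X(1 := X x)))
      = ((-1) ^ (x + 1) * (-1) ^ (a - 1)) * (sgn_sub e * det_k (card e) (rowsub e X))"
    unfolding det sgn by (simp only: mult_ac)
  also have "(-1) ^ (x + 1) * (-1) ^ (a - 1) = ((-1) powi (int a - int x) :: 'a)"
    using e(2) by (simp add: power_int_minus_one_diff minus_one_power_iff)
  finally show ?thesis .
qed

definition kernel_coeff :: "nat \<Rightarrow> (nat \<Rightarrow> 'a::field) \<Rightarrow> nat set \<Rightarrow> 'a" where
  "kernel_coeff k z c = 1 + (\<Sum>\<alpha>=1..k. z (elem_of c \<alpha>) * (-1) powi (int \<alpha> - int (elem_of c \<alpha>)))"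

lemma sum_sgn_sub_det_k_move_to_front:
  fixes X :: "nat \<Rightarrow> nat \<Rightarrow> 'a::field"
  assumes e: "finite e" "card e = k" "0 \<notin> e" "1 \<notin> e"
  shows "(\<Sum>x\<in>e. z x * (sgn_sub (insert 1 (e - {x}))
            * det_k k (rowsub (insert 1 (e - {x})) (X(1 := X x)))))
    = sgn_sub e * det_k k (rowsub e X) * (kernel_coeff k z e - 1)"
proof -
  let ?F = "\<lambda>x. z x * (sgn_sub (insert 1 (e - {x}))
                          * det_k k (rowsub (insert 1 (e - {x})) (X(1 := X x))))"
  have "(\<Sum>x\<in>e. ?F x) = (\<Sum>\<alpha>=1..k. ?F (elem_of e \<alpha>))"
    using sum_elem_of[OF e(1), of ?F] e(2) by simp
  also have "\<dots> = (\<Sum>\<alpha>=1..k. sgn_sub e * det_k k (rowsub e X)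
                      * (z (elem_of e \<alpha>) * (-1) powi (int \<alpha> - int (elem_of e \<alpha>))))"
    using sgn_sub_det_k_move_to_front[OF e(1) _ e(3,4), of _ X] e(2)
    by (intro sum.cong) (simp_all add: mult_ac)
  also have "\<dots> = sgn_sub e * det_k k (rowsub e X) * (kernel_coeff k z e - 1)"
    by (simp add: kernel_coeff_def sum_distrib_left)
  finally show ?thesis .
qed

lemma cullis_det_eq_sum_kernel_coeff:
  fixes X :: "nat \<Rightarrow> nat \<Rightarrow> 'a::field"
  assumes k: "1 \<le> k" "k \<le> n" and row: "\<forall>j\<in>{1..k}. X 1 j = (\<Sum>i=2..n. z i * X i j)"
  shows "cullis_det n k X
    = (\<Sum>e | e \<subseteq> {2..n} \<and> card e = k. sgn_sub e * det_k k (rowsub e X) * kernel_coeff k z e)"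
proof -
  obtain m where m: "k = Suc m" using k by (cases k) auto
  let ?A = "{2..n}"
  define f where "f c = sgn_sub c * det_k k (rowsub c X)" for c
  define T where
    "T e x = z x * (sgn_sub (insert 1 (e - {x}))
                      * det_k k (rowsub (insert 1 (e - {x})) (X(1 := X x))))"
    for e x
  have A: "finite ?A" "\<forall>v\<in>?A. 1 < v" "1 \<notin> ?A" and "{1..n} = insert 1 ?A" using k by auto
  then have "cullis_det n k X
      = (\<Sum>e | e \<subseteq> ?A \<and> card e = k. f e) + (\<Sum>d | d \<subseteq> ?A \<and> card d = m. f (insert 1 d))"
    unfolding cullis_det_def f_def m by (simp add: sum_subsets_insert)
  also have "(\<Sum>d | d \<subseteq> ?A \<and> card d = m. f (insert 1 d))
      = (\<Sum>d | d \<subseteq> ?A \<and> card d = m. \<Sum>i\<in>?A - d. T (insert i d) i)"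
  proof (rule sum.cong[OF refl])
    fix d assume "d \<in> {d. d \<subseteq> ?A \<and> card d = m}"
    then have d: "d \<subseteq> ?A" "card d = m" by auto
    have "f (insert 1 d)
        = sgn_sub (insert 1 d) * (\<Sum>i\<in>?A - d. z i * det_k k (rowsub (insert 1 d) (X(1 := X i))))"
      unfolding f_def m using det_k_rowsub_expand_min_row[OF A(1,2) d, of X z] row m by simp
    also have "\<dots> = (\<Sum>i\<in>?A - d. T (insert i d) i)"
      unfolding T_def sum_distrib_left by (intro sum.cong) (auto simp: insert_Diff_if mult_ac)
    finally show "f (insert 1 d) = (\<Sum>i\<in>?A - d. T (insert i d) i)" .
  qed
  also have "\<dots> = (\<Sum>e | e \<subseteq> ?A \<and> card e = k. \<Sum>x\<in>e. T e x)"
    unfolding m by (rule sum_insert_pairs[OF A(1)])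
  also have "\<dots> = (\<Sum>e | e \<subseteq> ?A \<and> card e = k. f e * (kernel_coeff k z e - 1))"
    unfolding T_def f_def
    by (intro sum.cong refl sum_sgn_sub_det_k_move_to_front) (auto intro: finite_subset)
  finally show ?thesis by (simp add: f_def algebra_simps flip: sum.distrib)
qed

definition kernel_witness :: "(nat \<Rightarrow> 'a::{zero,one}) \<Rightarrow> nat set \<Rightarrow> nat \<Rightarrow> nat \<Rightarrow> 'a" where
  "kernel_witness z c i j = (if i = 1 then z (elem_of c j) else if i = elem_of c j then 1 else 0)"

lemma kernel_witness_first_row:
  fixes z :: "nat \<Rightarrow> 'a::semiring_1"
  assumes c: "c \<subseteq> {2..n}" "j \<in> {1..card c}"
  shows "kernel_witness z c 1 j = (\<Sum>i=2..n. z i * kernel_witness z c i j)"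
proof -
  have "elem_of c j \<in> c" using elem_of_in[OF finite_subset[OF c(1)] c(2)] by simp
  then have "(\<Sum>i=2..n. z i * kernel_witness z c i j) = (\<Sum>i=2..n. if i = elem_of c j then z i else 0)"
    by (intro sum.cong) (auto simp: kernel_witness_def)
  also have "\<dots> = z (elem_of c j)" using \<open>elem_of c j \<in> c\<close> c(1) by auto
  finally show ?thesis by (simp add: kernel_witness_def)
qed

lemma det_k_rowsub_kernel_witness:
  assumes c: "c \<subseteq> {2..n}" "card c = k" and e: "e \<subseteq> {2..n}" "card e = k"
  shows "det_k k (rowsub e (kernel_witness z c)) = (if e = c then 1 else 0)"
proof -
  have fc: "finite c" and fe: "finite e" using c e finite_subset by auto
  have elem_c: "elem_of c j \<in> c" if "j \<in> {1..k}" for j using elem_of_in[OF fc] c(2) that by blast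
  show ?thesis
  proof (cases "e = c")
    case True
    have "elem_of c i = elem_of c j \<longleftrightarrow> i = j" if "i \<in> {1..k}" "j \<in> {1..k}" for i j
      using strict_mono_on_eq[OF strict_mono_on_elem_of] that c(2) by blast
    moreover have "elem_of c i \<noteq> 1" if "i \<in> {1..k}" for i using elem_c[OF that] c(1) by auto
    ultimately have "det_k k (rowsub c (kernel_witness z c)) = det_k k (\<lambda>i j. if i = j then 1 else 0)"
      by (intro det_k_cong) (auto simp: rowsub_def kernel_witness_def)
    with True show ?thesis by (simp add: det_k_identity)
  next
    case False
    then have "\<not> e \<subseteq> c" using card_subset_eq[OF fc] c(2) e(2) by auto
    then obtain x where x: "x \<in> e" "x \<notin> c" by blast
    then obtain \<beta> where \<beta>: "\<beta> \<in> {1..k}" "elem_of e \<beta> = x"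
      using elem_ofE[OF fe] e(2) by metis
    have "x \<noteq> 1" using x e by auto
    then have "det_k k (rowsub e (kernel_witness z c)) = 0"
      using \<beta> x elem_c by (intro det_k_zero_row[of \<beta>]) (auto simp: rowsub_def kernel_witness_def)
    with False show ?thesis by simp
  qed
qed

lemma cullis_det_kernel_witness:
  fixes z :: "nat \<Rightarrow> 'a::field"
  assumes k: "1 \<le> k" "k \<le> n" and c: "c \<subseteq> {2..n}" "card c = k"
  shows "cullis_det n k (kernel_witness z c) = sgn_sub c * kernel_coeff k z c"
proof -
  let ?P = "{e. e \<subseteq> {2..n} \<and> card e = k}"
  have "\<forall>j\<in>{1..k}. kernel_witness z c 1 j = (\<Sum>i=2..n. z i * kernel_witness z c i j)"
    using kernel_witness_first_row[OF c(1)] c(2) by blast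
  then have "cullis_det n k (kernel_witness z c)
      = (\<Sum>e\<in>?P. sgn_sub e * det_k k (rowsub e (kernel_witness z c)) * kernel_coeff k z e)"
    by (rule cullis_det_eq_sum_kernel_coeff[OF k])
  also have "\<dots> = (\<Sum>e\<in>?P. if e = c then sgn_sub c * kernel_coeff k z c else 0)"
  proof (rule sum.cong[OF refl])
    fix e assume "e \<in> ?P"
    then show "sgn_sub e * det_k k (rowsub e (kernel_witness z c)) * kernel_coeff k z e
        = (if e = c then sgn_sub c * kernel_coeff k z c else 0)"
      using det_k_rowsub_kernel_witness[OF c, of e z] by auto
  qed
  also have "\<dots> = sgn_sub c * kernel_coeff k z c"
    using c by (simp add: finite_subset[of _ "Pow {2..n}"])
  finally show ?thesis .
qed

lemma sum_eq_zero_iff_first_term: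
  fixes z x :: "nat \<Rightarrow> 'a::ring_1"
  assumes "1 \<le> n" "z 1 = -1"
  shows "(\<Sum>i=1..n. z i * x i) = 0 \<longleftrightarrow> x 1 = (\<Sum>i=2..n. z i * x i)"
proof -
  have "(\<Sum>i=1..n. z i * x i) = z 1 * x 1 + (\<Sum>i=2..n. z i * x i)"
    using assms(1) by (simp add: sum.atLeast_Suc_atMost numeral_2_eq_2)
  then show ?thesis using assms(2) by (auto simp: algebra_simps)
qed

theorem mainTheorem5:
  fixes z :: "nat \<Rightarrow> 'a::field" and n k :: nat
  assumes "1 \<le> k" and "k \<le> n" and "z 1 = -1"
  shows "(\<forall>X :: nat \<Rightarrow> nat \<Rightarrow> 'a.
            (\<forall>j\<in>{1..k}. (\<Sum>i=1..n. z i * X i j) = 0) \<longrightarrow> cullis_det n k X = 0)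
     \<longleftrightarrow> (\<forall>c. c \<subseteq> {1..n} \<and> card c = k \<and> 1 \<notin> c \<longrightarrow>
            1 + (\<Sum>\<alpha>=1..k. z (elem_of c \<alpha>) * (-1) powi (int \<alpha> - int (elem_of c \<alpha>))) = 0)"
proof -
  have kernel: "(\<forall>j\<in>{1..k}. (\<Sum>i=1..n. z i * X i j) = 0)
      \<longleftrightarrow> (\<forall>j\<in>{1..k}. X 1 j = (\<Sum>i=2..n. z i * X i j))"
    for X :: "nat \<Rightarrow> nat \<Rightarrow> 'a"
    using sum_eq_zero_iff_first_term[of n z "\<lambda>i. X i _"] assms by simp
  have "{1..n} - {1} = {2..n}" by auto
  then have subsets: "c \<subseteq> {1..n} \<and> card c = k \<and> 1 \<notin> c \<longleftrightarrow> c \<subseteq> {2..n} \<and> card c = k"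
    for c :: "nat set"
    by blast
  show ?thesis
    unfolding kernel subsets kernel_coeff_def[symmetric]
  proof (intro iffI allI impI)
    fix c assume "\<forall>X. (\<forall>j\<in>{1..k}. X 1 j = (\<Sum>i=2..n. z i * X i j)) \<longrightarrow> cullis_det n k X = 0"
      and "c \<subseteq> {2..n} \<and> card c = k"
    then have "sgn_sub c * kernel_coeff k z c = 0"
      using kernel_witness_first_row[of c n _ z] cullis_det_kernel_witness[OF assms(1,2), of c z]
      by auto
    then show "kernel_coeff k z c = 0" by (simp add: sgn_sub_def)
  next
    fix X assume coeff: "\<forall>c. c \<subseteq> {2..n} \<and> card c = k \<longrightarrow> kernel_coeff k z c = 0"
      and row: "\<forall>j\<in>{1..k}. X 1 j = (\<Sum>i=2..n. z i * X i j)"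
    show "cullis_det n k X = 0"
      using coeff by (simp add: cullis_det_eq_sum_kernel_coeff[OF assms(1,2) row])
  qed
qed

end
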